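(* For $n\in\mathbb N$ let $A_n=\mathrm{diag}(n^{-1/2},n^{-1})$ (a $2\times 2$ matrix). There exists $n_0\in\mathbb N$ such that, for the index set $I=\{\lfloor i(\log i)^2\rfloor: i\ge n_0\}\subset\mathbb N$ and the matrices $(A_n)_{n\in I}$, the pressure satisfies $P(t)=\infty$ for all $0\le t<\frac32$ and $P(t)<0$ for all $t\ge\frac32$; in particular $P(t)\ne0$ for every $t\in[0,\infty)$.
   Context: For a countable index set $I$ and matrices $A_n$ ($n\in I$), for a word $\mathtt j=(j_1,\dots,j_k)$, $\alpha_1(\mathtt j)\ge\alpha_2(\mathtt j)$ are the singular values of $A_{j_1}\cdots A_{j_k}$, and with $d=2$ the singular value function is $\phi^t(\mathtt j)=\alpha_1(\mathtt j)^t$ for $0\le t<1$, $\phi^t(\mathtt j)=\alpha_1(\mathtt j)\alpha_2(\mathtt j)^{t-1}$ for $1\le t<2$, and $\phi^t(\mathtt j)=(\alpha_1(\mathtt j)\alpha_2(\mathtt j))^{t/2}$ for $t\ge2$. The pressure is $P(t)=\lim_{k\to\infty}\frac1k\log\sum_{\mathtt j\in I^k}\phi^t(\mathtt j)\in(-\infty,\infty]$. *)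

theory Defs
  imports "HOL-Analysis.Analysis"
begin

definition gram_eigenvalues :: "real^2^2 \<Rightarrow> real set" where
  "gram_eigenvalues M = {l. \<exists>v. v \<noteq> 0 \<and> (transpose M ** M) *v v = l *\<^sub>R v}"

definition sv1 :: "real^2^2 \<Rightarrow> real" where
  "sv1 M = sqrt (Max (gram_eigenvalues M))"

definition sv2 :: "real^2^2 \<Rightarrow> real" where
  "sv2 M = sqrt (Min (gram_eigenvalues M))"

definition svf :: "real \<Rightarrow> real^2^2 \<Rightarrow> real" where
  "svf t M = (if t < 1 then sv1 M powr t
              else if t < 2 then sv1 M * sv2 M powr (t - 1)
              else (sv1 M * sv2 M) powr (t / 2))"

definition word_prod :: "(nat \<Rightarrow> real^2^2) \<Rightarrow> nat list \<Rightarrow> real^2^2" where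
  "word_prod A w = foldr (\<lambda>j M. A j ** M) w (mat 1)"

text \<open>Partition sum over I^k (possibly infinite, hence in ennreal).\<close>
definition part_sum :: "(nat \<Rightarrow> real^2^2) \<Rightarrow> nat set \<Rightarrow> real \<Rightarrow> nat \<Rightarrow> ennreal" where
  "part_sum A I t k = (\<Sum>\<^sub>\<infinity> w\<in>{w. length w = k \<and> set w \<subseteq> I}. ennreal (svf t (word_prod A w)))"

definition elog :: "ennreal \<Rightarrow> ereal" where
  "elog z = (if z = \<infinity> then \<infinity> else if z = 0 then -\<infinity> else ereal (ln (enn2real z)))"

definition pressure_seq :: "(nat \<Rightarrow> real^2^2) \<Rightarrow> nat set \<Rightarrow> real \<Rightarrow> nat \<Rightarrow> ereal" where
  "pressure_seq A I t k = ereal (1 / real k) * elog (part_sum A I t k)"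

definition pressure :: "(nat \<Rightarrow> real^2^2) \<Rightarrow> nat set \<Rightarrow> real \<Rightarrow> ereal" where
  "pressure A I t = lim (pressure_seq A I t)"

definition diagA :: "nat \<Rightarrow> real^2^2" where
  "diagA n = (\<chi> i j. if i = j then (if i = 1 then real n powr (-1/2) else real n powr (-1)) else 0)"

end

theory Submission
  imports Defs
begin

text \<open>
  Every \<open>A n\<close> is diagonal with decreasing entries, so the product along a word \<open>w\<close> is
  \<open>diag(N powr (-1/2), N powr (-1))\<close>, where \<open>N\<close> is the product of the letters of \<open>w\<close>,
  and \<open>\<phi>\<^sup>t\<close> of it is \<open>N powr (-s(t))\<close> with \<open>s(t) = t/2, t - 1/2, 3t/4\<close> on
  \<open>[0,1), [1,2), [2,\<infinity>)\<close>. The partition sum over \<open>I\<^sup>k\<close> is therefore \<open>Z\<^sup>k\<close> for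
  \<open>Z = \<Sum>n\<in>I. n powr (-s(t))\<close>, and \<open>P(t) = log Z\<close>.
  For \<open>I = {\<lfloor>i (ln i)\<^sup>2\<rfloor> | i \<ge> 10}\<close> the series \<open>Z\<close> diverges when \<open>s < 1\<close>, because then
  \<open>\<lfloor>i (ln i)\<^sup>2\<rfloor> powr s \<le> C i\<close> and the harmonic series diverges. When \<open>s \<ge> 1\<close> it is
  positive and at most \<open>2 \<Sum>i\<ge>10. 1 / (i (ln i)\<^sup>2) \<le> 2 / ln 9 < 1\<close>, by telescoping against
  \<open>1 / ln (i - 1) - 1 / ln i\<close>. Since \<open>s(t) < 1\<close> exactly when \<open>t < 3/2\<close>, the pressure is
  \<open>\<infinity>\<close> below \<open>3/2\<close> and negative from \<open>3/2\<close> on.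
\<close>

section \<open>Partition sums over words\<close>

lemma sum_le_infsum_ennreal:
  fixes f :: "'a \<Rightarrow> ennreal"
  assumes "finite F" "F \<subseteq> A"
  shows "sum f F \<le> infsum f A"
  using infsum_mono_neutral[of f F f A] assms by (auto simp: infsum_finite nonneg_summable_on_complete)

lemma infsum_ennreal_product:
  fixes f :: "'a \<Rightarrow> ennreal" and g :: "'b \<Rightarrow> ennreal"
  shows "(\<Sum>\<^sub>\<infinity>(x,y)\<in>A \<times> B. f x * g y) = infsum f A * infsum g B"
proof -
  have sum_times: "sum f F * sum g G = (\<Sum>(x,y)\<in>F \<times> G. f x * g y)"
    if "finite F" "finite G" for F G
    using that by (simp add: sum_product sum.cartesian_product)
  have rhs: "infsum f A * infsum g B =
      (SUP F\<in>{F. finite F \<and> F \<subseteq> A}. SUP G\<in>{G. finite G \<and> G \<subseteq> B}. sum f F * sum g G)"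
    by (simp add: nonneg_infsum_complete SUP_mult_left_ennreal SUP_mult_right_ennreal)
      (rule SUP_commute)
  show ?thesis
  proof (rule antisym)
    show "(\<Sum>\<^sub>\<infinity>(x,y)\<in>A \<times> B. f x * g y) \<le> infsum f A * infsum g B"
    proof (rule infsum_le_finite_sums)
      fix H assume H: "finite H" "H \<subseteq> A \<times> B"
      have "(\<Sum>(x,y)\<in>H. f x * g y) \<le> (\<Sum>(x,y)\<in>fst ` H \<times> snd ` H. f x * g y)"
        using H by (intro sum_mono2) (auto simp: subset_fst_snd)
      also have "\<dots> = sum f (fst ` H) * sum g (snd ` H)"
        using H by (simp add: sum_times)
      also have "\<dots> \<le> infsum f A * infsum g B"
      proof (rule mult_mono)
        show "sum f (fst ` H) \<le> infsum f A" "sum g (snd ` H) \<le> infsum g B"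
          using H by (auto intro!: sum_le_infsum_ennreal)
      qed simp_all
      finally show "(\<Sum>(x,y)\<in>H. f x * g y) \<le> infsum f A * infsum g B" .
    qed (simp add: nonneg_summable_on_complete)
    show "infsum f A * infsum g B \<le> (\<Sum>\<^sub>\<infinity>(x,y)\<in>A \<times> B. f x * g y)"
      unfolding rhs
    proof (intro SUP_least)
      fix F G assume "F \<in> {F. finite F \<and> F \<subseteq> A}" "G \<in> {G. finite G \<and> G \<subseteq> B}"
      then have "sum f F * sum g G = (\<Sum>(x,y)\<in>F \<times> G. f x * g y)"
        by (simp add: sum_times)
      also have "\<dots> \<le> (\<Sum>\<^sub>\<infinity>(x,y)\<in>A \<times> B. f x * g y)"
        using \<open>F \<in> _\<close> \<open>G \<in> _\<close> by (intro sum_le_infsum_ennreal) auto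
      finally show "sum f F * sum g G \<le> (\<Sum>\<^sub>\<infinity>(x,y)\<in>A \<times> B. f x * g y)" .
    qed
  qed
qed

lemma lists_length_Suc_eq:
  "{w. length w = Suc k \<and> set w \<subseteq> I} = (\<lambda>(x,w). x # w) ` (I \<times> {w. length w = k \<and> set w \<subseteq> I})"
proof (rule set_eqI, rule iffI)
  fix w assume "w \<in> {w. length w = Suc k \<and> set w \<subseteq> I}"
  then show "w \<in> (\<lambda>(x,w). x # w) ` (I \<times> {w. length w = k \<and> set w \<subseteq> I})"
    by (cases w) auto
qed auto

lemma infsum_prod_list_lists:
  fixes f :: "'a \<Rightarrow> ennreal"
  shows "(\<Sum>\<^sub>\<infinity>w\<in>{w. length w = k \<and> set w \<subseteq> I}. prod_list (map f w)) = infsum f I ^ k"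
proof (induction k)
  case 0
  have "{w. length w = 0 \<and> set w \<subseteq> I} = {[]}" by auto
  then show ?case by simp
next
  case (Suc k)
  have inj: "inj_on (\<lambda>(x,w). x # w) (I \<times> {w. length w = k \<and> set w \<subseteq> I})"
    by (auto simp: inj_on_def)
  have "(\<Sum>\<^sub>\<infinity>w\<in>{w. length w = Suc k \<and> set w \<subseteq> I}. prod_list (map f w))
      = (\<Sum>\<^sub>\<infinity>(x,w)\<in>I \<times> {w. length w = k \<and> set w \<subseteq> I}. f x * prod_list (map f w))"
    unfolding lists_length_Suc_eq infsum_reindex[OF inj] by (rule infsum_cong) auto
  also have "\<dots> = infsum f I * infsum f I ^ k"
    by (simp only: infsum_ennreal_product Suc.IH)
  finally show ?case by simp
qed

lemma elog_power: "elog (z ^ k) = ereal (real k) * elog z"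
proof (cases "k = 0")
  case False
  show ?thesis
  proof (cases z rule: ennreal_cases)
    case (real r)
    then show ?thesis
      using False by (cases "r = 0") (auto simp: elog_def ennreal_power ln_realpow power_0_left)
  qed (use False in \<open>simp add: elog_def top_power_ennreal\<close>)
qed (simp add: elog_def)

lemma pressure_eq_elog:
  assumes "\<And>k. part_sum A I t k = Z ^ k"
  shows "convergent (pressure_seq A I t) \<and> pressure A I t = elog Z"
proof -
  have "pressure_seq A I t k = elog Z" if "k \<ge> 1" for k
    using that by (simp add: pressure_seq_def assms elog_power mult.assoc[symmetric])
  then have "pressure_seq A I t \<longlonglongrightarrow> elog Z"
    by (intro tendsto_eventually) (auto simp: eventually_sequentially)
  then show ?thesis
    by (auto simp: convergent_def pressure_def limI)
qed

section \<open>Diagonal matrices\<close>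

definition diag2 :: "real \<Rightarrow> real \<Rightarrow> real^2^2" where
  "diag2 a b = (\<chi> i j. if i = j then (if i = 1 then a else b) else 0)"

lemma diag2_mult: "diag2 a b ** diag2 c d = diag2 (a * c) (b * d)"
  by (simp add: diag2_def matrix_matrix_mult_def vec_eq_iff sum_2 forall_2)

lemma mat_1_eq_diag2: "mat 1 = diag2 1 1"
  by (simp add: diag2_def mat_def vec_eq_iff forall_2)

lemma transpose_diag2: "transpose (diag2 a b) = diag2 a b"
  by (simp add: diag2_def transpose_def vec_eq_iff forall_2)

lemma diag2_mult_vec: "diag2 a b *v v = (\<chi> i. if i = 1 then a * v$1 else b * v$i)"
  by (simp add: diag2_def matrix_vector_mult_def vec_eq_iff sum_2 forall_2)

lemma gram_eigenvalues_diag2: "gram_eigenvalues (diag2 a b) = {a^2, b^2}"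
proof -
  have gram: "transpose (diag2 a b) ** diag2 a b = diag2 (a^2) (b^2)"
    by (simp add: transpose_diag2 diag2_mult power2_eq_square)
  have eigen: "diag2 (a^2) (b^2) *v v = l *\<^sub>R v \<longleftrightarrow> (a^2 - l) * v$1 = 0 \<and> (b^2 - l) * v$2 = 0"
    for v :: "real^2" and l
    by (auto simp: diag2_mult_vec vec_eq_iff forall_2 algebra_simps)
  have axes: "axis 1 1 \<noteq> (0::real^2)" "axis 2 1 \<noteq> (0::real^2)"
    by (simp_all add: axis_eq_0_iff)
  show ?thesis
  proof (intro set_eqI iffI)
    fix l assume "l \<in> gram_eigenvalues (diag2 a b)"
    then obtain v :: "real^2" where "v \<noteq> 0" "(a^2 - l) * v$1 = 0" "(b^2 - l) * v$2 = 0"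
      unfolding gram_eigenvalues_def gram eigen by blast
    then show "l \<in> {a^2, b^2}"
      by (auto simp: vec_eq_iff forall_2)
  next
    fix l assume "l \<in> {a^2, b^2}"
    then show "l \<in> gram_eigenvalues (diag2 a b)"
      unfolding gram_eigenvalues_def gram eigen using axes by (auto simp: axis_def)
  qed
qed

lemma
  assumes "0 \<le> b" "b \<le> a"
  shows sv1_diag2: "sv1 (diag2 a b) = a" and sv2_diag2: "sv2 (diag2 a b) = b"
proof -
  have "b^2 \<le> a^2" using assms by (simp add: power_mono)
  then show "sv1 (diag2 a b) = a" "sv2 (diag2 a b) = b"
    using assms by (auto simp: sv1_def sv2_def gram_eigenvalues_diag2 max_def min_def)
qed

lemma word_prod_Nil: "word_prod A [] = mat 1"
  and word_prod_Cons: "word_prod A (n # w) = A n ** word_prod A w"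
  by (simp_all add: word_prod_def)

lemma diagA_eq_diag2: "diagA n = diag2 (real n powr (-1/2)) (real n powr (-1))"
  by (simp only: diagA_def diag2_def)

lemma prod_list_powr: "prod_list (map (\<lambda>n. real n powr p) w) = prod_list (map real w) powr p"
  by (induction w) (simp_all add: powr_mult prod_list_nonneg)

lemma one_le_prod_list:
  fixes xs :: "'a :: linordered_idom list"
  shows "(\<forall>x\<in>set xs. 1 \<le> x) \<Longrightarrow> 1 \<le> prod_list xs"
proof (induction xs)
  case (Cons x xs)
  then show ?case using mult_mono[of 1 x 1 "prod_list xs"] by simp
qed simp

lemma ennreal_prod_list:
  "(\<forall>x\<in>set xs. 0 \<le> x) \<Longrightarrow> ennreal (prod_list xs) = prod_list (map ennreal xs)"
  by (induction xs) (simp_all add: ennreal_mult prod_list_nonneg)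

lemma word_prod_diagA:
  "word_prod diagA w =
     diag2 (prod_list (map real w) powr (-1/2)) (prod_list (map real w) powr (-1))"
  unfolding prod_list_powr[symmetric]
  by (induction w) (simp_all only: word_prod_Nil word_prod_Cons mat_1_eq_diag2 diagA_eq_diag2
      diag2_mult list.map prod_list.Cons prod_list.Nil)

definition diag_exponent :: "real \<Rightarrow> real" where
  "diag_exponent t = (if t < 1 then t / 2 else if t < 2 then t - 1/2 else 3 * t / 4)"

lemma svf_diag2_powr:
  assumes "1 \<le> N"
  shows "svf t (diag2 (N powr (-1/2)) (N powr (-1))) = N powr (- diag_exponent t)"
proof -
  have "N powr (-1) \<le> N powr (-1/2)"
    using assms by (intro powr_mono) auto
  then have sv1: "sv1 (diag2 (N powr (-1/2)) (N powr (-1))) = N powr (-1/2)"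
    and sv2: "sv2 (diag2 (N powr (-1/2)) (N powr (-1))) = N powr (-1)"
    by (simp_all add: sv1_diag2 sv2_diag2)
  have "(N powr (-1/2)) powr t = N powr (-1/2 * t)"
    by (simp only: powr_powr)
  moreover have "N powr (-1/2) * (N powr (-1)) powr (t - 1) = N powr (-1/2 + -1 * (t - 1))"
    by (simp only: powr_powr powr_add)
  moreover have "(N powr (-1/2) * N powr (-1)) powr (t / 2) = N powr ((-1/2 + -1) * (t / 2))"
    by (simp only: powr_powr flip: powr_add)
  ultimately show ?thesis
    unfolding svf_def sv1 sv2 diag_exponent_def by (simp add: algebra_simps)
qed

lemma svf_word_prod_diagA:
  assumes "\<forall>n\<in>set w. 1 \<le> n"
  shows "svf t (word_prod diagA w) = prod_list (map (\<lambda>n. real n powr (- diag_exponent t)) w)"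
proof -
  have "1 \<le> prod_list (map real w)"
    using assms by (intro one_le_prod_list) auto
  then show ?thesis
    by (simp only: word_prod_diagA svf_diag2_powr prod_list_powr)
qed

lemma part_sum_diagA:
  assumes "\<forall>n\<in>I. 1 \<le> n"
  shows "part_sum diagA I t k = (\<Sum>\<^sub>\<infinity>n\<in>I. ennreal (real n powr (- diag_exponent t))) ^ k"
proof -
  have "part_sum diagA I t k = (\<Sum>\<^sub>\<infinity>w\<in>{w. length w = k \<and> set w \<subseteq> I}.
      prod_list (map (\<lambda>n. ennreal (real n powr (- diag_exponent t))) w))"
    unfolding part_sum_def
  proof (rule infsum_cong)
    fix w assume "w \<in> {w. length w = k \<and> set w \<subseteq> I}"
    then have "\<forall>n\<in>set w. 1 \<le> n" using assms by auto
    then show "ennreal (svf t (word_prod diagA w)) =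
        prod_list (map (\<lambda>n. ennreal (real n powr (- diag_exponent t))) w)"
      by (simp add: svf_word_prod_diagA ennreal_prod_list o_def)
  qed
  then show ?thesis
    by (simp only: infsum_prod_list_lists)
qed

lemma pressure_diagA:
  assumes "\<forall>n\<in>I. 1 \<le> n"
  shows "convergent (pressure_seq diagA I t) \<and>
    pressure diagA I t = elog (\<Sum>\<^sub>\<infinity>n\<in>I. ennreal (real n powr (- diag_exponent t)))"
  by (intro pressure_eq_elog part_sum_diagA assms)

section \<open>The series over the sparse index set\<close>

lemma ln_gt_2:
  fixes x :: real
  assumes "9 \<le> x"
  shows "2 < ln x"
proof -
  have "exp (2::real) = exp 1 * exp 1" by (simp flip: exp_add)
  also have "\<dots> < 3 * 3" using exp_le e_less_272 by (intro mult_strict_mono) auto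
  finally have exp_2: "exp (2::real) < 9" by simp
  have "2 = ln (exp (2::real))" by simp
  also have "\<dots> < ln 9" using exp_2 by (subst ln_less_cancel_iff) auto
  also have "\<dots> \<le> ln x" using assms by simp
  finally show ?thesis .
qed

lemma inverse_x_ln_sq_le_diff:
  fixes x :: real
  assumes "10 \<le> x"
  shows "1 / (x * (ln x)^2) \<le> 1 / ln (x - 1) - 1 / ln x"
proof -
  have ln_pos: "2 < ln (x - 1)" using ln_gt_2 assms by simp
  have ln_mono: "ln (x - 1) \<le> ln x" using assms by simp
  have "ln ((x - 1) / x) \<le> (x - 1) / x - 1" using assms by (intro ln_le_minus_one) auto
  then have diff: "1 / x \<le> ln x - ln (x - 1)"
    using assms by (simp add: ln_div field_simps)
  have "1 / (x * (ln x)^2) = (1 / x) / (ln x * ln x)" by (simp add: power2_eq_square)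
  also have "\<dots> \<le> (ln x - ln (x - 1)) / (ln x * ln x)"
    using diff ln_pos ln_mono by (intro divide_right_mono) auto
  also have "\<dots> \<le> (ln x - ln (x - 1)) / (ln x * ln (x - 1))"
    using diff ln_pos ln_mono by (intro divide_left_mono mult_left_mono mult_pos_pos) auto
  also have "\<dots> = 1 / ln (x - 1) - 1 / ln x" using ln_pos ln_mono by (simp add: field_simps)
  finally show ?thesis .
qed

lemma sum_inverse_x_ln_sq_le:
  "9 \<le> N \<Longrightarrow> (\<Sum>i=10..N. 1 / (real i * (ln (real i))^2)) \<le> 1 / ln 9 - 1 / ln (real N)"
proof (induction N rule: dec_induct)
  case (step n)
  then have "(\<Sum>i=10..Suc n. 1 / (real i * (ln (real i))^2))
      \<le> (1 / ln 9 - 1 / ln (real n)) + (1 / ln (real (Suc n) - 1) - 1 / ln (real (Suc n)))"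
    using inverse_x_ln_sq_le_diff[of "real (Suc n)"] by (simp add: atLeastAtMostSuc_conv)
  then show ?case by simp
qed simp

lemma harm_diff: "m \<le> n \<Longrightarrow> harm n - harm m = (\<Sum>i=Suc m..n. 1 / real i)"
proof (induction n rule: dec_induct)
  case (step n)
  then show ?case by (simp add: harm_Suc atLeastAtMostSuc_conv field_simps)
qed simp

lemma infsum_ennreal_eq_top_if_unbounded:
  fixes f :: "nat \<Rightarrow> real"
  assumes nonneg: "\<And>i. m \<le> i \<Longrightarrow> 0 \<le> f i"
    and unbounded: "filterlim (\<lambda>n. \<Sum>i=m..n. f i) at_top sequentially"
  shows "(\<Sum>\<^sub>\<infinity>i\<in>{m..}. ennreal (f i)) = \<infinity>"
proof (rule ccontr)
  assume "(\<Sum>\<^sub>\<infinity>i\<in>{m..}. ennreal (f i)) \<noteq> \<infinity>"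
  then obtain z where z: "(\<Sum>\<^sub>\<infinity>i\<in>{m..}. ennreal (f i)) = ennreal z" "0 \<le> z"
    by (cases "\<Sum>\<^sub>\<infinity>i\<in>{m..}. ennreal (f i)" rule: ennreal_cases) auto
  have "\<forall>\<^sub>F n in sequentially. z < (\<Sum>i=m..n. f i)"
    using unbounded by (simp add: filterlim_at_top_dense)
  then obtain n where n: "z < (\<Sum>i=m..n. f i)"
    by (auto simp: eventually_sequentially)
  have "ennreal (\<Sum>i=m..n. f i) = (\<Sum>i=m..n. ennreal (f i))"
    using nonneg by (subst sum_ennreal) auto
  also have "\<dots> \<le> ennreal z"
    unfolding z(1)[symmetric] by (intro sum_le_infsum_ennreal) auto
  finally show False
    using n z(2) by (simp add: ennreal_le_iff)
qed

lemma infsum_ennreal_harmonic_eq_top: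
  fixes c :: real
  assumes "0 < c" "1 \<le> m"
  shows "(\<Sum>\<^sub>\<infinity>i\<in>{m..}. ennreal (c / real i)) = \<infinity>"
proof (rule infsum_ennreal_eq_top_if_unbounded)
  have "filterlim (\<lambda>n. - harm (m - 1) + harm n :: real) at_top sequentially"
    by (rule filterlim_tendsto_add_at_top[OF tendsto_const harm_at_top])
  then have "filterlim (\<lambda>n. c * (harm n - harm (m - 1))) at_top sequentially"
    using assms(1) by (intro filterlim_tendsto_pos_mult_at_top[OF tendsto_const]) simp_all
  moreover have "\<forall>\<^sub>F n in sequentially. c * (harm n - harm (m - 1)) \<le> (\<Sum>i=m..n. c / real i)"
    using assms(2) by (intro eventually_sequentiallyI[of "m - 1"])
      (simp add: harm_diff sum_distrib_left)
  ultimately show "filterlim (\<lambda>n. \<Sum>i=m..n. c / real i) at_top sequentially"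
    by (rule filterlim_at_top_mono)
qed (use assms in auto)

definition sparse_index :: "nat \<Rightarrow> nat" where
  "sparse_index i = nat \<lfloor>real i * (ln (real i))\<^sup>2\<rfloor>"

lemma
  assumes "10 \<le> i"
  shows sparse_index_ge: "real i * (ln (real i))\<^sup>2 / 2 \<le> real (sparse_index i)"
    and sparse_index_le: "real (sparse_index i) \<le> real i * (ln (real i))\<^sup>2"
proof -
  have "2^2 \<le> (ln (real i))\<^sup>2"
    using ln_gt_2[of "real i"] assms by (intro power_mono) auto
  with assms have "40 \<le> real i * (ln (real i))\<^sup>2"
    using mult_mono[of 10 "real i" "2^2" "(ln (real i))\<^sup>2"] by simp
  then show "real i * (ln (real i))\<^sup>2 / 2 \<le> real (sparse_index i)"
    and "real (sparse_index i) \<le> real i * (ln (real i))\<^sup>2"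
    unfolding sparse_index_def by linarith+
qed

lemma sparse_index_pos:
  assumes "10 \<le> i"
  shows "0 < sparse_index i"
proof -
  have "0 < real i * (ln (real i))\<^sup>2 / 2"
    using assms ln_gt_2[of "real i"] by simp
  then show ?thesis
    using sparse_index_ge[OF assms] by linarith
qed

lemma sparse_index_strict_mono: "strict_mono_on {10..} sparse_index"
proof (rule strict_mono_onI)
  fix i j :: nat assume "i \<in> {10..}" "i < j"
  define x y where "x = real i" and "y = real j"
  have xy: "10 \<le> x" "x + 1 \<le> y"
    using \<open>i \<in> {10..}\<close> \<open>i < j\<close> by (auto simp: x_def y_def)
  have ln_x: "2 < ln x" "ln x \<le> ln y"
    using ln_gt_2[of x] xy by auto
  then have "(ln x)\<^sup>2 \<le> (ln y)\<^sup>2" "2^2 \<le> (ln y)\<^sup>2"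
    by (intro power_mono; linarith)+
  moreover from this(1) have "x * (ln x)\<^sup>2 \<le> x * (ln y)\<^sup>2"
    using xy by (intro mult_left_mono) auto
  ultimately have "x * (ln x)\<^sup>2 + 1 < (x + 1) * (ln y)\<^sup>2"
    by (simp add: algebra_simps)
  also have "\<dots> \<le> y * (ln y)\<^sup>2"
    using xy by (intro mult_right_mono) auto
  finally have "\<lfloor>x * (ln x)\<^sup>2\<rfloor> < \<lfloor>y * (ln y)\<^sup>2\<rfloor>"
    by linarith
  moreover have "0 \<le> \<lfloor>x * (ln x)\<^sup>2\<rfloor>"
    using xy by simp
  ultimately show "sparse_index i < sparse_index j"
    unfolding sparse_index_def x_def y_def by linarith
qed

lemma sparse_index_powr_le:
  assumes "10 \<le> i" "1 \<le> s"
  shows "real (sparse_index i) powr (- s) \<le> 2 / (real i * (ln (real i))\<^sup>2)"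
proof -
  have pos: "0 < real i * (ln (real i))\<^sup>2"
    using assms ln_gt_2[of "real i"] by simp
  have "real (sparse_index i) powr (- s) \<le> real (sparse_index i) powr (- 1)"
    using assms sparse_index_pos[of i] by (intro powr_mono) auto
  also have "\<dots> = 1 / real (sparse_index i)"
    by (simp add: powr_minus_divide)
  also have "\<dots> \<le> 1 / (real i * (ln (real i))\<^sup>2 / 2)"
    using pos sparse_index_ge[OF assms(1)] by (intro divide_left_mono) auto
  finally show ?thesis by simp
qed

lemma sparse_series_le:
  assumes "1 \<le> s"
  shows "(\<Sum>\<^sub>\<infinity>i\<in>{10..}. ennreal (real (sparse_index i) powr (- s))) \<le> ennreal (2 / ln 9)"
proof (rule infsum_le_finite_sums)
  fix F :: "nat set" assume F: "finite F" "F \<subseteq> {10..}"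
  obtain N where "F \<subseteq> {10..N}" "9 \<le> N"
  proof
    show "F \<subseteq> {10..max (Max F) 9}"
      using F(2) Max_ge[OF F(1)] by (force simp: le_max_iff_disj)
  qed simp
  then have "(\<Sum>i\<in>F. real (sparse_index i) powr (- s)) \<le> (\<Sum>i=10..N. real (sparse_index i) powr (- s))"
    by (intro sum_mono2) auto
  also have "\<dots> \<le> (\<Sum>i=10..N. 2 * (1 / (real i * (ln (real i))\<^sup>2)))"
    using assms by (intro sum_mono) (simp add: sparse_index_powr_le)
  also have "\<dots> = 2 * (\<Sum>i=10..N. 1 / (real i * (ln (real i))\<^sup>2))"
    by (simp add: sum_distrib_left)
  also have "\<dots> \<le> 2 * (1 / ln 9 - 1 / ln (real N))"
    using sum_inverse_x_ln_sq_le[OF \<open>9 \<le> N\<close>] by simp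
  also have "\<dots> \<le> 2 / ln 9"
    using ln_gt_2[of "real N"] \<open>9 \<le> N\<close> by simp
  finally have "ennreal (\<Sum>i\<in>F. real (sparse_index i) powr (- s)) \<le> ennreal (2 / ln 9)"
    by (rule ennreal_leI)
  then show "(\<Sum>i\<in>F. ennreal (real (sparse_index i) powr (- s))) \<le> ennreal (2 / ln 9)"
    by (subst sum_ennreal) auto
qed (rule nonneg_summable_on_complete, simp)

lemma sparse_series_pos:
  "0 < (\<Sum>\<^sub>\<infinity>i\<in>{10..}. ennreal (real (sparse_index i) powr (- s)))"
proof -
  have "0 < ennreal (real (sparse_index 10) powr (- s))"
    using sparse_index_pos[of 10] by simp
  also have "\<dots> = (\<Sum>i\<in>{10}. ennreal (real (sparse_index i) powr (- s)))"
    by simp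
  also have "\<dots> \<le> (\<Sum>\<^sub>\<infinity>i\<in>{10..}. ennreal (real (sparse_index i) powr (- s)))"
    by (intro sum_le_infsum_ennreal) auto
  finally show ?thesis .
qed

lemma ln_sq_le_powr:
  fixes x :: real
  assumes "1 \<le> x" "0 < a"
  shows "(ln x)\<^sup>2 \<le> x powr (2 * a) / a\<^sup>2"
proof -
  have "(ln x)\<^sup>2 \<le> (x powr a / a)\<^sup>2"
    using assms by (intro power_mono ln_powr_bound) auto
  also have "\<dots> = x powr (2 * a) / a\<^sup>2"
    using assms by (simp add: power_divide powr_power)
  finally show ?thesis .
qed

lemma sparse_index_powr_ge:
  assumes "s < 1"
  obtains c where "0 < c" "\<And>i. 10 \<le> i \<Longrightarrow> c / real i \<le> real (sparse_index i) powr (- s)"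
proof
  define s' where "s' = max s (1/2)"
  have s': "1/2 \<le> s'" "s' < 1" "s \<le> s'" using assms by (auto simp: s'_def)
  define a where "a = (1 / s' - 1) / 2"
  \<comment> \<open>Since \<open>(1 + 2a) s' = 1\<close>, the bound \<open>x powr (1 + 2a) / a\<^sup>2\<close> raised to \<open>-s'\<close> is exactly \<open>(a\<^sup>2) powr s' / x\<close>.\<close>
  have a: "0 < a" "(1 + 2 * a) * s' = 1" using s' by (auto simp: a_def field_simps)
  show "0 < (a\<^sup>2) powr s'" using a by simp
  fix i :: nat assume i: "10 \<le> i"
  define x where "x = real i"
  have x: "10 \<le> x" using i by (simp add: x_def)
  have "real (sparse_index i) \<le> x * (ln x)\<^sup>2"
    using sparse_index_le[OF i] by (simp add: x_def)
  also have "\<dots> \<le> x * (x powr (2 * a) / a\<^sup>2)"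
    using x a by (intro mult_left_mono ln_sq_le_powr) auto
  also have "\<dots> = x powr (1 + 2 * a) / a\<^sup>2"
    using x by (simp add: powr_add)
  finally have upper: "real (sparse_index i) \<le> x powr (1 + 2 * a) / a\<^sup>2" .
  have "(a\<^sup>2) powr s' / x = (x powr (1 + 2 * a)) powr (- s') / (a\<^sup>2) powr (- s')"
    using x a(2) by (simp add: powr_powr powr_minus_divide)
  also have "\<dots> = (x powr (1 + 2 * a) / a\<^sup>2) powr (- s')"
    using x a by (simp add: powr_divide)
  also have "\<dots> \<le> real (sparse_index i) powr (- s')"
    using upper sparse_index_pos[OF i] s' by (intro powr_mono2') auto
  also have "\<dots> \<le> real (sparse_index i) powr (- s)"
    using sparse_index_pos[OF i] s' by (intro powr_mono) auto
  finally show "(a\<^sup>2) powr s' / real i \<le> real (sparse_index i) powr (- s)"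
    by (simp add: x_def)
qed

lemma sparse_series_eq_top:
  assumes "s < 1"
  shows "(\<Sum>\<^sub>\<infinity>i\<in>{10..}. ennreal (real (sparse_index i) powr (- s))) = \<infinity>"
proof -
  obtain c where c: "0 < c" "\<And>i. 10 \<le> i \<Longrightarrow> c / real i \<le> real (sparse_index i) powr (- s)"
    using sparse_index_powr_ge[OF assms] by blast
  have "\<infinity> = (\<Sum>\<^sub>\<infinity>i\<in>{10..}. ennreal (c / real i))"
    using infsum_ennreal_harmonic_eq_top[OF c(1), of 10] by simp
  also have "\<dots> \<le> (\<Sum>\<^sub>\<infinity>i\<in>{10..}. ennreal (real (sparse_index i) powr (- s)))"
  proof (rule infsum_mono)
    fix i :: nat assume "i \<in> {10..}"
    then show "ennreal (c / real i) \<le> ennreal (real (sparse_index i) powr (- s))"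
      using c(2) by (simp add: ennreal_leI)
  qed (rule nonneg_summable_on_complete, simp)+
  finally show ?thesis
    by (simp add: top_unique)
qed

lemma sparse_series_less_1:
  assumes "1 \<le> s"
  shows "(\<Sum>\<^sub>\<infinity>i\<in>{10..}. ennreal (real (sparse_index i) powr (- s))) < 1"
proof -
  have "2 / ln 9 < (1::real)"
    using ln_gt_2[of 9] by simp
  then have "ennreal (2 / ln 9) < 1"
    by (simp add: ennreal_less_iff)
  with sparse_series_le[OF assms] show ?thesis
    by (rule le_less_trans)
qed

lemma elog_less_0: "0 < z \<Longrightarrow> z < 1 \<Longrightarrow> elog z < 0"
  by (cases z rule: ennreal_cases) (auto simp: elog_def ennreal_less_iff)

lemma
  fixes t :: real
  defines "I \<equiv> sparse_index ` {10..}"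
  shows convergent_pressure_seq_sparse: "convergent (pressure_seq diagA I t)"
    and pressure_sparse_eq_top: "t < 3/2 \<Longrightarrow> pressure diagA I t = \<infinity>"
    and pressure_sparse_less_0: "3/2 \<le> t \<Longrightarrow> pressure diagA I t < 0"
proof -
  define Z where "Z = (\<Sum>\<^sub>\<infinity>i\<in>{10..}. ennreal (real (sparse_index i) powr (- diag_exponent t)))"
  have "\<forall>n\<in>I. 1 \<le> n"
    using sparse_index_pos by (auto simp: I_def Suc_le_eq)
  then have pressure: "convergent (pressure_seq diagA I t) \<and> pressure diagA I t = elog Z"
    using pressure_diagA[of I t] strict_mono_on_imp_inj_on[OF sparse_index_strict_mono]
    by (simp add: Z_def I_def infsum_reindex o_def)
  then show "convergent (pressure_seq diagA I t)" ..
  show "pressure diagA I t = \<infinity>" if "t < 3/2"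
    using pressure sparse_series_eq_top[of "diag_exponent t"] that
    by (simp add: Z_def diag_exponent_def elog_def)
  show "pressure diagA I t < 0" if "3/2 \<le> t"
    using pressure elog_less_0[OF sparse_series_pos sparse_series_less_1] that
    by (simp add: Z_def diag_exponent_def)
qed

theorem mainTheorem9:
  shows "\<exists>n0::nat.
    (let I = {nat \<lfloor>real i * (ln (real i))\<^sup>2\<rfloor> | i. i \<ge> n0} in
      (\<forall>t::real. 0 \<le> t \<and> t < 3/2 \<longrightarrow>
         convergent (pressure_seq diagA I t) \<and> pressure diagA I t = \<infinity>) \<and>
      (\<forall>t::real. t \<ge> 3/2 \<longrightarrow>
         convergent (pressure_seq diagA I t) \<and> pressure diagA I t < 0) \<and>
      (\<forall>t::real. t \<ge> 0 \<longrightarrow> pressure diagA I t \<noteq> 0))"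
proof -
  have I: "{nat \<lfloor>real i * (ln (real i))\<^sup>2\<rfloor> | i. i \<ge> (10::nat)} = sparse_index ` {10..}"
    unfolding sparse_index_def by auto
  have "pressure diagA (sparse_index ` {10..}) t \<noteq> 0" for t
    using pressure_sparse_eq_top[of t] pressure_sparse_less_0[of t] by force
  then show ?thesis
    by (intro exI[where x = "10::nat"])
      (simp add: Let_def I convergent_pressure_seq_sparse pressure_sparse_eq_top pressure_sparse_less_0)
qed

end
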